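(* Let $F$ be a finite field with $q$ elements and $G$ a finite abelian group of order $m$. Let $r\in(0,1)$ and $\delta\in(0,1-q^{-1})$, and for each $n$ put $k=[rn]$ (the integer nearest to $rn$). Let $A$ be uniformly random in $(FG)^{k\times n}$, let $C_A=\{\mathbf{b}A\mid \mathbf{b}\in(FG)^k\}$ and let $\Delta(C_A)$ be its relative distance. If $r<g_q(\delta)$, then $\lim_{n\to\infty}\Pr\big(\Delta(C_A)>\delta\big)=1$, and the convergence is exponential.
   Context: Each element $\sum_{z\in G}a_z z$ of the group algebra $FG$ is identified with the word $(a_z)_{z\in G}\in F^m$, and elements of $(FG)^n$ with concatenated words of length $mn$; Hamming weight is $\mathrm{w}$. For $\mathbf{b}=(b_1,\dots,b_k)$, $\mathbf{b}A=(\sum_i b_ia_{i1},\dots,\sum_i b_ia_{in})$. $\Delta(C_A)=\mathrm{w}(C_A)/(mn)$ with $\mathrm{w}(C_A)$ the minimum weight of nonzero codewords of $C_A$. $h_q(x)=x\log_q(q-1)-x\log_q x-(1-x)\log_q(1-x)$ (with $0\log_q0=0$) and $g_q(x)=1-h_q(x)$. *)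

theory Defs
  imports Complex_Main "HOL-Library.Extended_Real" "HOL-Library.Function_Algebras"
begin

text \<open>Group algebra FG: elements are functions G \<Rightarrow> F (coefficient words indexed by G).
  The finite abelian group G is a finite type of class ab_group_add (written additively),
  F a finite field type.\<close>

definition ga_mult :: "('g::{finite,ab_group_add} \<Rightarrow> 'f::field) \<Rightarrow> ('g \<Rightarrow> 'f) \<Rightarrow> ('g \<Rightarrow> 'f)" where
  "ga_mult x y = (\<lambda>z. \<Sum>u\<in>UNIV. x u * y (z - u))"

text \<open>k \<times> n matrices over FG: functions on indices, zero outside i<k, j<n.\<close>
definition mats :: "nat \<Rightarrow> nat \<Rightarrow> (nat \<Rightarrow> nat \<Rightarrow> ('g::{finite,ab_group_add} \<Rightarrow> 'f::field)) set" where
  "mats k n = {A. \<forall>i j. (k \<le> i \<or> n \<le> j) \<longrightarrow> A i j = 0}"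

definition vecs :: "nat \<Rightarrow> (nat \<Rightarrow> ('g::{finite,ab_group_add} \<Rightarrow> 'f::field)) set" where
  "vecs k = {b. \<forall>i. k \<le> i \<longrightarrow> b i = 0}"

definition vec_mat :: "nat \<Rightarrow> nat \<Rightarrow> (nat \<Rightarrow> ('g::{finite,ab_group_add} \<Rightarrow> 'f::field))
     \<Rightarrow> (nat \<Rightarrow> nat \<Rightarrow> ('g \<Rightarrow> 'f)) \<Rightarrow> (nat \<Rightarrow> ('g \<Rightarrow> 'f))" where
  "vec_mat k n b A = (\<lambda>j. if j < n then (\<Sum>i<k. ga_mult (b i) (A i j)) else 0)"

definition code_of :: "nat \<Rightarrow> nat \<Rightarrow> (nat \<Rightarrow> nat \<Rightarrow> ('g::{finite,ab_group_add} \<Rightarrow> 'f::field))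
     \<Rightarrow> (nat \<Rightarrow> ('g \<Rightarrow> 'f)) set" where
  "code_of k n A = {vec_mat k n b A | b. b \<in> vecs k}"

text \<open>Hamming weight of the concatenated word of length m n.\<close>
definition weight :: "nat \<Rightarrow> (nat \<Rightarrow> ('g::finite \<Rightarrow> 'f::zero)) \<Rightarrow> nat" where
  "weight n c = (\<Sum>j<n. card {z. c j z \<noteq> 0})"

definition min_weight :: "nat \<Rightarrow> (nat \<Rightarrow> ('g::finite \<Rightarrow> 'f::zero)) set \<Rightarrow> enat" where
  "min_weight n C = (INF c \<in> C - {0}. enat (weight n c))"

definition rel_distance :: "nat \<Rightarrow> (nat \<Rightarrow> ('g::finite \<Rightarrow> 'f::zero)) set \<Rightarrow> ereal" where
  "rel_distance n C = ereal_of_enat (min_weight n C) / ereal (real (card (UNIV :: 'g set) * n))"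

definition hq :: "real \<Rightarrow> real \<Rightarrow> real" where
  "hq q x = x * log q (q - 1)
      - (if x = 0 then 0 else x * log q x)
      - (if x = 1 then 0 else (1 - x) * log q (1 - x))"

definition gq :: "real \<Rightarrow> real \<Rightarrow> real" where
  "gq q x = 1 - hq q x"

definition prob_good :: "'f::{finite,field} itself \<Rightarrow> 'g::{finite,ab_group_add} itself
     \<Rightarrow> real \<Rightarrow> real \<Rightarrow> nat \<Rightarrow> real" where
  "prob_good _ _ r \<delta> n =
     (let k = nat (round (r * real n));
          M = (mats k n :: (nat \<Rightarrow> nat \<Rightarrow> ('g \<Rightarrow> 'f)) set)
      in real (card {A \<in> M. rel_distance n (code_of k n A) > ereal \<delta>}) / real (card M))"

end

theory Submission
  imports Defs "HOL-Library.FuncSet"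
begin

text \<open>The code \<open>C\<^sub>A\<close> has relative distance at most \<open>\<delta>\<close> iff some message \<open>b\<close> has a nonzero
  codeword \<open>b A\<close> of weight at most \<open>\<delta> m n\<close>. For fixed \<open>b\<close> the entries of \<open>b\<close> generate an
  ideal \<open>J\<close> of \<open>FG\<close>, and \<open>A \<mapsto> b A\<close> maps \<open>(FG)\<^bsup>k\<times>n\<^esup>\<close> additively onto \<open>J\<^sup>n\<close>, so \<open>b A\<close> is
  uniformly distributed on \<open>J\<^sup>n\<close>. As \<open>J\<close> is a translation-invariant \<open>F\<close>-subspace of \<open>F\<^sup>G\<close>, an
  information set of \<open>J\<close> and an averaging over its translates show that \<open>J\<^sup>n\<close> contains at most
  \<open>m |J|\<^bsup>n h\<^sub>q(\<delta>)\<^esup>\<close> such light words. At most \<open>|J|\<^sup>k\<close> messages generate \<open>J\<close> and \<open>|J| \<ge> 2\<close>, so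
  the union bound over messages gives a failure probability of at most a constant times
  \<open>2\<^bsup>k - n g\<^sub>q(\<delta>)\<^esup>\<close>, which decays exponentially when \<open>r < g\<^sub>q(\<delta>)\<close>.\<close>

lemma ga_mult_add_right: "ga_mult b (x + y) = ga_mult b x + ga_mult b y"
  unfolding ga_mult_def by (auto simp: fun_eq_iff distrib_left sum.distrib)

lemma ga_mult_zero_right: "ga_mult b 0 = 0"
  unfolding ga_mult_def by (auto simp: fun_eq_iff)

lemma ga_mult_diff_right: "ga_mult b (x - y) = ga_mult b x - ga_mult b y"
  unfolding ga_mult_def by (auto simp: fun_eq_iff right_diff_distrib sum_subtractf)

lemma ga_mult_scale_right: "ga_mult b (\<lambda>z. a * x z) = (\<lambda>z. a * ga_mult b x z)"
  unfolding ga_mult_def by (auto simp: fun_eq_iff sum_distrib_left algebra_simps)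

lemma ga_mult_shift_right: "ga_mult b (\<lambda>z. x (z + g)) = (\<lambda>z. ga_mult b x (z + g))"
  unfolding ga_mult_def by (auto simp: fun_eq_iff algebra_simps)

lemma ga_mult_unit_right: "ga_mult b (\<lambda>w. if w = 0 then 1 else 0) = b"
proof (rule ext)
  fix z
  have "ga_mult b (\<lambda>w. if w = 0 then 1 else 0) z = (\<Sum>u\<in>UNIV. if u = z then b u else 0)"
    unfolding ga_mult_def by (rule sum.cong) auto
  also have "\<dots> = b z" by simp
  finally show "ga_mult b (\<lambda>w. if w = 0 then 1 else 0) z = b z" .
qed

lemma sum_fun_apply: "(\<Sum>i\<in>A. f i) z = (\<Sum>i\<in>A. f i z)"
  by (induction A rule: infinite_finite_induct) auto

definition words :: "nat \<Rightarrow> 'a::zero set \<Rightarrow> (nat \<Rightarrow> 'a) set" where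
  "words n J = {c. (\<forall>j<n. c j \<in> J) \<and> (\<forall>j\<ge>n. c j = 0)}"

lemma words_eq_image_PiE:
  "words n J = (\<lambda>f j. if j < n then f j else 0) ` PiE {..<n} (\<lambda>_. J)"
proof
  show "words n J \<subseteq> (\<lambda>f j. if j < n then f j else 0) ` PiE {..<n} (\<lambda>_. J)"
  proof
    fix c assume c: "c \<in> words n J"
    have "c = (\<lambda>j. if j < n then restrict c {..<n} j else 0)"
      using c by (auto simp: words_def fun_eq_iff)
    moreover have "restrict c {..<n} \<in> PiE {..<n} (\<lambda>_. J)" using c by (auto simp: words_def)
    ultimately show "c \<in> (\<lambda>f j. if j < n then f j else 0) ` PiE {..<n} (\<lambda>_. J)" by blast
  qed
  show "(\<lambda>f j. if j < n then f j else 0) ` PiE {..<n} (\<lambda>_. J) \<subseteq> words n J"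
  proof
    fix c assume "c \<in> (\<lambda>f j. if j < n then f j else 0) ` PiE {..<n} (\<lambda>_. J)"
    then obtain f where "f \<in> PiE {..<n} (\<lambda>_. J)" "c = (\<lambda>j. if j < n then f j else 0)" by blast
    thus "c \<in> words n J" unfolding words_def by auto
  qed
qed

lemma inj_on_zero_extension:
  "inj_on (\<lambda>f j. if j < n then f j else 0) (PiE {..<n} (\<lambda>_. J))"
proof (rule inj_onI)
  fix f f' assume f: "f \<in> PiE {..<n} (\<lambda>_. J)" and f': "f' \<in> PiE {..<n} (\<lambda>_. J)"
    and eq: "(\<lambda>j. if j < n then f j else 0) = (\<lambda>j. if j < n then f' j else 0)"
  show "f = f'"
  proof (rule PiE_ext[OF f f'])
    fix j assume "j \<in> {..<n}"
    thus "f j = f' j" using fun_cong[OF eq, of j] by simp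
  qed
qed

lemma card_words: "card (words n J) = card J ^ n"
  unfolding words_eq_image_PiE by (simp add: card_image[OF inj_on_zero_extension] card_PiE)

lemma finite_words: "finite J \<Longrightarrow> finite (words n J)"
  unfolding words_eq_image_PiE by (simp add: finite_PiE)

lemma vecs_eq_words: "vecs k = words k UNIV"
  by (simp add: vecs_def words_def)

lemma mats_eq_words: "mats k n = words k (words n UNIV)"
  unfolding mats_def words_def by (auto simp: fun_eq_iff) (metis not_le)

lemma finite_mats:
  "finite (mats k n :: (nat \<Rightarrow> nat \<Rightarrow> ('g::{finite,ab_group_add} \<Rightarrow> 'f::{finite,field})) set)"
  unfolding mats_eq_words by (intro finite_words) (simp add: finite_words)

lemma finite_vecs: "finite (vecs k :: (nat \<Rightarrow> ('g::{finite,ab_group_add} \<Rightarrow> 'f::{finite,field})) set)"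
  unfolding vecs_eq_words by (simp add: finite_words)

section \<open>Subspaces of \<open>F\<^sup>X\<close> and information sets\<close>

definition lin_subspace :: "('x \<Rightarrow> 'f::field) set \<Rightarrow> bool" where
  "lin_subspace J \<longleftrightarrow> 0 \<in> J \<and> (\<forall>x\<in>J. \<forall>y\<in>J. x + y \<in> J) \<and> (\<forall>a. \<forall>x\<in>J. (\<lambda>z. a * x z) \<in> J)"

lemma lin_subspace_diff:
  assumes "lin_subspace J" "x \<in> J" "y \<in> J"
  shows "x - y \<in> J"
proof -
  have "(\<lambda>z. (-1) * y z) \<in> J" using assms unfolding lin_subspace_def by blast
  hence "x + (\<lambda>z. (-1) * y z) \<in> J" using assms unfolding lin_subspace_def by blast
  moreover have "x + (\<lambda>z. (-1) * y z) = x - y" by (auto simp: fun_eq_iff)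
  ultimately show ?thesis by simp
qed

lemma lin_subspace_sum_scaled:
  assumes "lin_subspace J" "finite I" "\<And>i. i \<in> I \<Longrightarrow> e i \<in> J"
  shows "(\<lambda>z. \<Sum>i\<in>I. v i * e i z) \<in> J"
  using assms(2,3)
proof (induction I rule: finite_induct)
  case empty
  then show ?case using assms(1) unfolding lin_subspace_def by (simp add: zero_fun_def)
next
  case (insert a I)
  have "(\<lambda>z. v a * e a z) + (\<lambda>z. \<Sum>i\<in>I. v i * e i z) \<in> J"
    using insert assms(1) unfolding lin_subspace_def by blast
  moreover have "(\<lambda>z. v a * e a z) + (\<lambda>z. \<Sum>i\<in>I. v i * e i z) = (\<lambda>z. \<Sum>i\<in>insert a I. v i * e i z)"
    using insert by (auto simp: fun_eq_iff)
  ultimately show ?case by simp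
qed

text \<open>The unit vector is a rescaled difference of two elements of \<open>J\<close> that agree off \<open>i\<close>.\<close>

lemma lin_subspace_unit_vector:
  assumes J: "lin_subspace J" and inj: "inj_on (\<lambda>c. restrict c I) J"
    and not_inj: "\<not> inj_on (\<lambda>c. restrict c (I - {i})) J" and i: "i \<in> I"
  shows "\<exists>e\<in>J. e i = 1 \<and> (\<forall>i'\<in>I - {i}. e i' = 0)"
proof -
  obtain c c' where cc: "c \<in> J" "c' \<in> J" "c \<noteq> c'"
      "restrict c (I - {i}) = restrict c' (I - {i})"
    using not_inj unfolding inj_on_def by blast
  define d where "d = c - c'"
  have dJ: "d \<in> J" unfolding d_def using lin_subspace_diff[OF J cc(1,2)] .
  have d0: "d i' = 0" if "i' \<in> I - {i}" for i'
    using fun_cong[OF cc(4), of i'] that by (simp add: d_def)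
  have di: "d i \<noteq> 0"
  proof
    assume "d i = 0"
    hence "restrict c I = restrict c' I"
      using d0 by (auto simp: d_def restrict_def fun_eq_iff)
    hence "c = c'" using inj_onD[OF inj _ cc(1,2)] by simp
    thus False using cc(3) by simp
  qed
  have "(\<lambda>z. inverse (d i) * d z) \<in> J" using J dJ unfolding lin_subspace_def by blast
  thus ?thesis using di d0 by (intro bexI[of _ "\<lambda>z. inverse (d i) * d z"]) auto
qed

text \<open>A minimal set of coordinates determining the elements of \<open>J\<close> is an information set.\<close>

lemma lin_subspace_information_set:
  fixes J :: "('x::finite \<Rightarrow> 'f::{finite,field}) set"
  assumes J: "lin_subspace J"
  obtains I where "inj_on (\<lambda>c. restrict c I) J" "card J = card (UNIV :: 'f set) ^ card I"
proof -
  define P where "P I \<longleftrightarrow> inj_on (\<lambda>c. restrict c I) J" for I :: "'x set"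
  have "P UNIV" unfolding P_def by (auto simp: inj_on_def restrict_def fun_eq_iff)
  then obtain I where PI: "P I" and Imin: "\<And>I'. P I' \<Longrightarrow> card I \<le> card I'"
    using ex_has_least_nat[of P UNIV card] by blast
  have "\<exists>e\<in>J. e i = 1 \<and> (\<forall>i'\<in>I - {i}. e i' = 0)" if i: "i \<in> I" for i
  proof (rule lin_subspace_unit_vector[OF J _ _ i])
    show "inj_on (\<lambda>c. restrict c I) J" using PI unfolding P_def .
    have "card (I - {i}) < card I" using i by (meson card_Diff1_less finite)
    thus "\<not> inj_on (\<lambda>c. restrict c (I - {i})) J" using Imin unfolding P_def by force
  qed
  then obtain E where E: "\<And>i. i \<in> I \<Longrightarrow> E i \<in> J \<and> E i i = 1 \<and> (\<forall>i'\<in>I - {i}. E i i' = 0)"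
    by metis
  define \<psi> where "\<psi> v = (\<lambda>z. \<Sum>i\<in>I. v i * E i z)" for v :: "'x \<Rightarrow> 'f"
  have \<psi>J: "\<psi> v \<in> J" for v unfolding \<psi>_def by (rule lin_subspace_sum_scaled[OF J]) (auto simp: E)
  have \<psi>r: "restrict (\<psi> v) I = v" if "v \<in> PiE I (\<lambda>_. UNIV)" for v
  proof (rule ext)
    fix x show "restrict (\<psi> v) I x = v x"
    proof (cases "x \<in> I")
      case True
      have "(\<Sum>i\<in>I. v i * E i x) = (\<Sum>i\<in>I. if i = x then v i else 0)"
        by (rule sum.cong) (use E True in auto)
      thus ?thesis using True by (simp add: \<psi>_def)
    next
      case False thus ?thesis using that by (auto simp: PiE_def extensional_def)
    qed
  qed
  have "card (PiE I (\<lambda>_. UNIV::'f set)) \<le> card J"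
  proof (rule card_inj_on_le[of \<psi>])
    show "inj_on \<psi> (PiE I (\<lambda>_. UNIV))" by (metis \<psi>r inj_onI)
  qed (auto simp: \<psi>J)
  moreover have "card J \<le> card (PiE I (\<lambda>_. UNIV::'f set))"
    by (rule card_inj_on_le[of "\<lambda>c. restrict c I"]) (use PI in \<open>auto simp: P_def finite_PiE\<close>)
  moreover have "card (PiE I (\<lambda>_. UNIV::'f set)) = card (UNIV :: 'f set) ^ card I"
    by (simp add: card_PiE)
  ultimately have "card J = card (UNIV :: 'f set) ^ card I" by linarith
  with PI show thesis unfolding P_def by (rule that)
qed

section \<open>Volume of Hamming balls\<close>

lemma card_field_ge2: "2 \<le> card (UNIV :: 'f::{finite,field} set)"
proof -
  have "card {0::'f, 1} \<le> card (UNIV :: 'f set)" by (rule card_mono) auto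
  thus ?thesis by simp
qed

lemma ln_mult_hq:
  fixes q d :: real
  assumes q: "2 \<le> q" and d: "0 < d" "d < 1"
  shows "ln q * hq q d = - d * ln (d / ((q - 1) * (1 - d))) - ln (1 - d)"
proof -
  have "ln q * hq q d = d * ln (q - 1) - d * ln d - (1 - d) * ln (1 - d)"
    using d q unfolding hq_def log_def by (simp add: field_simps)
  moreover have "ln (d / ((q - 1) * (1 - d))) = ln d - ln (q - 1) - ln (1 - d)"
    using d q by (simp add: ln_div ln_mult)
  ultimately show ?thesis by (simp only:) (simp add: algebra_simps)
qed

lemma sum_power_card_support_PiE:
  fixes y :: real and X :: "'x set"
  assumes X: "finite X"
  shows "(\<Sum>v\<in>PiE X (\<lambda>_. UNIV :: 'f::{finite,zero} set). y ^ card {x\<in>X. v x \<noteq> 0})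
       = (1 + (real (card (UNIV :: 'f set)) - 1) * y) ^ card X"
proof -
  have "(\<Sum>v\<in>PiE X (\<lambda>_. UNIV :: 'f set). y ^ card {x\<in>X. v x \<noteq> 0})
      = (\<Sum>v\<in>PiE X (\<lambda>_. UNIV :: 'f set). \<Prod>x\<in>X. (\<lambda>x a. if a \<noteq> 0 then y else 1) x (v x))"
  proof (rule sum.cong)
    fix v :: "'x \<Rightarrow> 'f"
    have "(\<Prod>x\<in>X. if v x \<noteq> 0 then y else 1) = y ^ card (X \<inter> {x. v x \<noteq> 0})"
      using X by (simp add: prod.If_cases)
    thus "y ^ card {x\<in>X. v x \<noteq> 0} = (\<Prod>x\<in>X. (\<lambda>x a. if a \<noteq> 0 then y else 1) x (v x))"
      by (simp add: Int_def conj_commute)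
  qed simp
  also have "\<dots> = (\<Prod>x\<in>X. \<Sum>a\<in>UNIV. if a \<noteq> (0::'f) then y else 1)"
    by (rule prod_sum_PiE[symmetric]) (auto simp: X)
  also have "(\<Sum>a\<in>UNIV. if a \<noteq> (0::'f) then y else 1) = 1 + (real (card (UNIV :: 'f set)) - 1) * y"
  proof -
    have "{a::'f. a \<noteq> 0} = UNIV - {0}" "UNIV - {a::'f. a \<noteq> 0} = {0}" by auto
    moreover have "1 \<le> card (UNIV :: 'f set)" by (simp add: Suc_leI finite_UNIV_card_ge_0)
    ultimately show ?thesis by (simp add: sum.If_cases card_Diff_singleton of_nat_diff)
  qed
  finally show ?thesis by simp
qed

text \<open>Chernoff's bound: every word of weight at most \<open>\<delta> N\<close> contributes at least \<open>1\<close> to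
  \<open>\<Sum>\<^sub>v y\<^bsup>wt v - \<delta> N\<^esup>\<close> for \<open>y = \<delta> / ((q - 1)(1 - \<delta>)) \<le> 1\<close>, and this sum equals
  \<open>q\<^bsup>N h\<^sub>q(\<delta>)\<^esup>\<close>.\<close>

lemma card_hamming_ball_le:
  fixes X :: "'x set" and \<delta> :: real
  assumes X: "finite X" and d0: "0 < \<delta>"
    and d1: "\<delta> \<le> 1 - 1 / real (card (UNIV :: 'f::{finite,field} set))"
  shows "real (card {v \<in> PiE X (\<lambda>_. UNIV :: 'f set). real (card {x\<in>X. v x \<noteq> 0}) \<le> \<delta> * real (card X)})
         \<le> real (card (UNIV :: 'f set)) powr (real (card X) * hq (real (card (UNIV :: 'f set))) \<delta>)"
proof -
  define q where "q = real (card (UNIV :: 'f set))"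
  define N where "N = card X"
  define wt where "wt v = card {x\<in>X. v x \<noteq> 0}" for v :: "'x \<Rightarrow> 'f"
  define F where "F = PiE X (\<lambda>_. UNIV :: 'f set)"
  have q2: "2 \<le> q" unfolding q_def using card_field_ge2[where 'f='f] by linarith
  have dl1: "\<delta> < 1" using d1 q2 unfolding q_def[symmetric] by (smt (verit) divide_pos_pos)
  define y where "y = \<delta> / ((q - 1) * (1 - \<delta>))"
  have y0: "0 < y" unfolding y_def using d0 dl1 q2 by simp
  have "\<delta> * q \<le> q - 1" using d1 q2 unfolding q_def[symmetric] by (simp add: field_simps)
  hence y1: "y \<le> 1" unfolding y_def using d0 dl1 q2 by (simp add: algebra_simps)
  have "real (card {v \<in> F. real (wt v) \<le> \<delta> * N}) = (\<Sum>v\<in>{v \<in> F. real (wt v) \<le> \<delta> * N}. 1)"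
    by simp
  also have "\<dots> \<le> (\<Sum>v\<in>{v \<in> F. real (wt v) \<le> \<delta> * N}. y powr (real (wt v) - \<delta> * N))"
  proof (rule sum_mono)
    fix v assume "v \<in> {v \<in> F. real (wt v) \<le> \<delta> * N}"
    hence "0 \<le> (real (wt v) - \<delta> * N) * ln y" using y0 y1 by (simp add: mult_nonpos_nonpos)
    thus "1 \<le> y powr (real (wt v) - \<delta> * N)" using y0 by (simp add: powr_def)
  qed
  also have "\<dots> \<le> (\<Sum>v\<in>F. y powr (real (wt v) - \<delta> * N))"
    using X unfolding F_def by (intro sum_mono2) (auto simp: finite_PiE)
  also have "\<dots> = y powr (- \<delta> * N) * (\<Sum>v\<in>F. y ^ wt v)"
    using y0 by (simp add: sum_distrib_left powr_diff powr_realpow powr_minus divide_inverse mult.commute)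
  also have "(\<Sum>v\<in>F. y ^ wt v) = (1 + (q - 1) * y) ^ N"
    using sum_power_card_support_PiE[OF X, of y]
    unfolding F_def wt_def N_def q_def by simp
  also have "1 + (q - 1) * y = 1 / (1 - \<delta>)"
  proof -
    have "(q - 1) * y = \<delta> / (1 - \<delta>)" unfolding y_def using q2 dl1 by simp
    thus ?thesis using dl1 by (simp add: field_simps)
  qed
  also have "y powr (- \<delta> * N) * (1 / (1 - \<delta>)) ^ N = exp (real N * (- \<delta> * ln y - ln (1 - \<delta>)))"
  proof -
    have "(1 / (1 - \<delta>)) ^ N = exp (real N * (- ln (1 - \<delta>)))"
      unfolding exp_of_nat_mult using dl1 by (simp add: exp_minus divide_inverse)
    moreover have "y powr (- \<delta> * N) = exp ((- \<delta> * N) * ln y)" using y0 by (simp add: powr_def)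
    ultimately show ?thesis by (simp add: exp_add[symmetric] algebra_simps)
  qed
  also have "\<dots> = q powr (real N * hq q \<delta>)"
    using ln_mult_hq[OF q2 d0 dl1] q2 unfolding y_def by (simp add: powr_def mult_ac)
  finally show ?thesis unfolding F_def wt_def N_def q_def .
qed

section \<open>Light words over a translation-invariant subspace\<close>

definition light_words :: "nat \<Rightarrow> real \<Rightarrow> (nat \<Rightarrow> 'g::finite \<Rightarrow> 'f::zero) set" where
  "light_words n \<delta> = {c. real (weight n c) \<le> \<delta> * real (card (UNIV :: 'g set) * n)}"

lemma sum_card_shifted_support:
  fixes c :: "nat \<Rightarrow> 'g::{finite,ab_group_add} \<Rightarrow> 'f::zero" and I :: "'g set"
  shows "(\<Sum>g\<in>UNIV. card {p \<in> {..<n} \<times> I. c (fst p) (snd p + g) \<noteq> 0}) = card I * weight n c"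
proof -
  define X where "X = {..<n} \<times> I"
  have shift: "(\<Sum>g\<in>UNIV. of_bool (f (i + g) \<noteq> 0) :: nat) = card {z. f z \<noteq> 0}"
    for f :: "'g \<Rightarrow> 'f" and i
  proof -
    have "(\<Sum>g\<in>UNIV. of_bool (f (i + g) \<noteq> 0) :: nat) = (\<Sum>z\<in>UNIV. of_bool (f z \<noteq> 0))"
      by (rule sum.reindex_bij_witness[of _ "\<lambda>z. z - i" "\<lambda>g. i + g"]) auto
    thus ?thesis by simp
  qed
  have "(\<Sum>g\<in>UNIV. card {p \<in> X. c (fst p) (snd p + g) \<noteq> 0})
      = (\<Sum>g\<in>UNIV. \<Sum>p\<in>X. of_bool (c (fst p) (snd p + g) \<noteq> 0))"
    unfolding X_def by (intro sum.cong) (simp_all add: Int_def conj_commute)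
  also have "\<dots> = (\<Sum>p\<in>X. \<Sum>g\<in>UNIV. of_bool (c (fst p) (snd p + g) \<noteq> 0))"
    by (rule sum.swap)
  also have "\<dots> = (\<Sum>p\<in>X. card {z. c (fst p) z \<noteq> 0})"
    by (simp add: shift)
  also have "\<dots> = (\<Sum>j<n. \<Sum>i\<in>I. card {z. c j z \<noteq> 0})"
    unfolding X_def sum.cartesian_product by (simp add: case_prod_beta)
  also have "\<dots> = card I * weight n c" by (simp add: weight_def sum_distrib_left)
  finally show ?thesis unfolding X_def .
qed

lemma exists_shift_light_on:
  fixes c :: "nat \<Rightarrow> 'g::{finite,ab_group_add} \<Rightarrow> 'f::zero" and I :: "'g set"
  shows "\<exists>g. card (UNIV :: 'g set) * card {p \<in> {..<n} \<times> I. c (fst p) (snd p + g) \<noteq> 0}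
           \<le> card I * weight n c"
proof (rule ccontr)
  assume "\<not> ?thesis"
  hence "(\<Sum>g\<in>(UNIV :: 'g set). card I * weight n c)
      < (\<Sum>g\<in>UNIV. card (UNIV :: 'g set) * card {p \<in> {..<n} \<times> I. c (fst p) (snd p + g) \<noteq> 0})"
    by (intro sum_strict_mono) (auto simp: not_le)
  thus False by (simp add: sum_distrib_left[symmetric] sum_card_shifted_support)
qed

lemma inj_on_restrict_shifted:
  fixes J :: "('g::{finite,ab_group_add} \<Rightarrow> 'f::zero) set"
  assumes inj: "inj_on (\<lambda>c. restrict c I) J" and shift: "\<And>c. c \<in> J \<Longrightarrow> (\<lambda>z. c (z + g)) \<in> J"
  shows "inj_on (\<lambda>c. restrict (\<lambda>p. c (fst p) (snd p + g)) ({..<n} \<times> I)) (words n J)"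
proof (rule inj_onI)
  fix c c' assume c: "c \<in> words n J" and c': "c' \<in> words n J"
    and eq: "restrict (\<lambda>p. c (fst p) (snd p + g)) ({..<n} \<times> I)
           = restrict (\<lambda>p. c' (fst p) (snd p + g)) ({..<n} \<times> I)"
  show "c = c'"
  proof (rule ext)
    fix j show "c j = c' j"
    proof (cases "j < n")
      case True
      have "restrict (\<lambda>z. c j (z + g)) I = restrict (\<lambda>z. c' j (z + g)) I"
      proof
        fix i show "restrict (\<lambda>z. c j (z + g)) I i = restrict (\<lambda>z. c' j (z + g)) I i"
          using fun_cong[OF eq, of "(j, i)"] True by (cases "i \<in> I") auto
      qed
      moreover have "(\<lambda>z. c j (z + g)) \<in> J" "(\<lambda>z. c' j (z + g)) \<in> J"
        using c c' True shift by (auto simp: words_def)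
      ultimately have "(\<lambda>z. c j (z + g)) = (\<lambda>z. c' j (z + g))" by (rule inj_onD[OF inj])
      hence "c j (z - g + g) = c' j (z - g + g)" for z by meson
      thus ?thesis by (simp add: fun_eq_iff)
    next
      case False thus ?thesis using c c' by (simp add: words_def)
    qed
  qed
qed

lemma card_light_on_shift_le:
  fixes J :: "('g::{finite,ab_group_add} \<Rightarrow> 'f::{finite,zero}) set" and n :: nat
  assumes inj: "inj_on (\<lambda>c. restrict c I) J" and shift: "\<And>c. c \<in> J \<Longrightarrow> (\<lambda>z. c (z + g)) \<in> J"
  defines "X \<equiv> {..<n} \<times> I"
  shows "card {c \<in> words n J. real (card {p\<in>X. c (fst p) (snd p + g) \<noteq> 0}) \<le> \<delta> * real (card X)}
       \<le> card {v \<in> PiE X (\<lambda>_. UNIV :: 'f set). real (card {x\<in>X. v x \<noteq> 0}) \<le> \<delta> * real (card X)}"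
proof (rule card_inj_on_le[of "\<lambda>c. restrict (\<lambda>p. c (fst p) (snd p + g)) X"])
  show "inj_on (\<lambda>c. restrict (\<lambda>p. c (fst p) (snd p + g)) X)
      {c \<in> words n J. real (card {p\<in>X. c (fst p) (snd p + g) \<noteq> 0}) \<le> \<delta> * real (card X)}"
    using inj_on_restrict_shifted[OF inj shift] unfolding X_def by (rule inj_on_subset) auto
  have "card {x\<in>X. restrict (\<lambda>p. c (fst p) (snd p + g)) X x \<noteq> 0}
      = card {p\<in>X. c (fst p) (snd p + g) \<noteq> 0}" for c :: "nat \<Rightarrow> 'g \<Rightarrow> 'f"
    by (rule arg_cong[of _ _ card]) auto
  thus "(\<lambda>c. restrict (\<lambda>p. c (fst p) (snd p + g)) X) `
          {c \<in> words n J. real (card {p\<in>X. c (fst p) (snd p + g) \<noteq> 0}) \<le> \<delta> * real (card X)}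
      \<subseteq> {v \<in> PiE X (\<lambda>_. UNIV :: 'f set). real (card {x\<in>X. v x \<noteq> 0}) \<le> \<delta> * real (card X)}"
    by auto
  show "finite {v \<in> PiE X (\<lambda>_. UNIV :: 'f set). real (card {x\<in>X. v x \<noteq> 0}) \<le> \<delta> * real (card X)}"
    unfolding X_def by (simp add: finite_PiE)
qed

text \<open>With an information set \<open>I\<close> of \<open>J\<close>, a word of \<open>J\<^sup>n\<close> is determined by its coordinates in
  \<open>{..<n} \<times> (I + g)\<close>, and for some translate \<open>g\<close> it is light there as well; so the light
  words embed into \<open>|G|\<close> Hamming balls of length \<open>n |I|\<close>.\<close>

lemma card_light_words_le:
  fixes J :: "('g::{finite,ab_group_add} \<Rightarrow> 'f::{finite,field}) set"
  assumes J: "lin_subspace J" and shift: "\<And>c g. c \<in> J \<Longrightarrow> (\<lambda>z. c (z + g)) \<in> J"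
    and d0: "0 < \<delta>" and d1: "\<delta> \<le> 1 - 1 / real (card (UNIV :: 'f set))"
  shows "real (card (words n J \<inter> light_words n \<delta>))
         \<le> real (card (UNIV :: 'g set)) * real (card J) powr (real n * hq (real (card (UNIV :: 'f set))) \<delta>)"
proof -
  obtain I where inj: "inj_on (\<lambda>c. restrict c I) J" and cJ: "card J = card (UNIV :: 'f set) ^ card I"
    using lin_subspace_information_set[OF J] by blast
  define m where "m = card (UNIV :: 'g set)"
  define q where "q = real (card (UNIV :: 'f set))"
  define X where "X = {..<n} \<times> I"
  define B where "B = {v \<in> PiE X (\<lambda>_. UNIV :: 'f set). real (card {x\<in>X. v x \<noteq> 0}) \<le> \<delta> * real (card X)}"
  define T where "T g = {c \<in> words n J. real (card {p\<in>X. c (fst p) (snd p + g) \<noteq> 0}) \<le> \<delta> * real (card X)}"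
    for g
  have m0: "0 < m" unfolding m_def by (simp add: finite_UNIV_card_ge_0)
  have cX: "card X = n * card I" unfolding X_def by (simp add: card_cartesian_product)
  have fin: "finite (words n J)" by (simp add: finite_words)
  have cover: "words n J \<inter> light_words n \<delta> \<subseteq> (\<Union>g. T g)"
  proof
    fix c assume c: "c \<in> words n J \<inter> light_words n \<delta>"
    obtain g where g: "m * card {p\<in>X. c (fst p) (snd p + g) \<noteq> 0} \<le> card I * weight n c"
      using exists_shift_light_on unfolding m_def X_def by blast
    have "real m * real (card {p\<in>X. c (fst p) (snd p + g) \<noteq> 0}) \<le> real (card I) * real (weight n c)"
      using g by (simp only: of_nat_mult[symmetric] of_nat_le_iff)
    also have "\<dots> \<le> real (card I) * (\<delta> * real (m * n))"
      using c unfolding light_words_def m_def by (intro mult_left_mono) auto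
    also have "\<dots> = real m * (\<delta> * real (card X))" unfolding cX by (simp add: algebra_simps)
    finally have "real (card {p\<in>X. c (fst p) (snd p + g) \<noteq> 0}) \<le> \<delta> * real (card X)" using m0 by simp
    thus "c \<in> (\<Union>g. T g)" using c unfolding T_def by blast
  qed
  have TB: "card (T g) \<le> card B" for g
    unfolding T_def B_def X_def by (rule card_light_on_shift_le[OF inj shift])
  have "real (card (words n J \<inter> light_words n \<delta>)) \<le> real (card (\<Union>g. T g))"
    using cover fin by (intro of_nat_mono card_mono) (auto simp: T_def)
  also have "\<dots> \<le> real (\<Sum>g\<in>UNIV. card (T g))"
    by (intro of_nat_mono card_UN_le) simp
  also have "\<dots> \<le> real m * real (card B)"
    using sum_mono[of UNIV "\<lambda>g. card (T g)" "\<lambda>_. card B", OF TB] unfolding m_def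
    by (simp only: sum_constant of_nat_id of_nat_mult[symmetric] of_nat_le_iff)
  also have "\<dots> \<le> real m * q powr (real (card X) * hq q \<delta>)"
    unfolding B_def q_def using card_hamming_ball_le[OF _ d0 d1, of X] m0
    by (intro mult_left_mono) (auto simp: X_def)
  also have "q powr (real (card X) * hq q \<delta>) = real (card J) powr (real n * hq q \<delta>)"
  proof -
    have "q powr (real (card X) * hq q \<delta>) = (q powr real (card I)) powr (real n * hq q \<delta>)"
      unfolding cX by (simp add: powr_powr algebra_simps)
    also have "q powr real (card I) = real (card J)"
      unfolding cJ q_def by (simp add: powr_realpow finite_UNIV_card_ge_0)
    finally show ?thesis .
  qed
  finally show ?thesis unfolding m_def q_def .
qed

section \<open>The ideal generated by a message and the distribution of its codeword\<close>

definition gen_ideal :: "nat \<Rightarrow> (nat \<Rightarrow> ('g::{finite,ab_group_add} \<Rightarrow> 'f::field)) \<Rightarrow> ('g \<Rightarrow> 'f) set" where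
  "gen_ideal k b = range (\<lambda>x. \<Sum>i<k. ga_mult (b i) (x i))"

lemma gen_idealI: "(\<Sum>i<k. ga_mult (b i) (x i)) \<in> gen_ideal k b"
  unfolding gen_ideal_def by blast

lemma lin_subspace_gen_ideal: "lin_subspace (gen_ideal k b)"
  unfolding lin_subspace_def
proof (intro conjI ballI allI)
  show "0 \<in> gen_ideal k b"
    using gen_idealI[where x = "\<lambda>_. 0" and k = k and b = b] by (simp add: ga_mult_zero_right)
next
  fix x y assume "x \<in> gen_ideal k b" "y \<in> gen_ideal k b"
  then obtain u v where "x = (\<Sum>i<k. ga_mult (b i) (u i))" "y = (\<Sum>i<k. ga_mult (b i) (v i))"
    unfolding gen_ideal_def by blast
  hence "x + y = (\<Sum>i<k. ga_mult (b i) (u i + v i))"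
    by (simp add: ga_mult_add_right sum.distrib)
  thus "x + y \<in> gen_ideal k b" by (simp only: gen_idealI)
next
  fix a x assume "x \<in> gen_ideal k b"
  then obtain u where u: "x = (\<Sum>i<k. ga_mult (b i) (u i))" unfolding gen_ideal_def by blast
  have "(\<lambda>z. a * x z) = (\<Sum>i<k. ga_mult (b i) (\<lambda>z. a * u i z))"
    unfolding u ga_mult_scale_right by (simp add: fun_eq_iff sum_fun_apply sum_distrib_left)
  thus "(\<lambda>z. a * x z) \<in> gen_ideal k b" by (simp only: gen_idealI)
qed

lemma gen_ideal_shift: "c \<in> gen_ideal k b \<Longrightarrow> (\<lambda>z. c (z + g)) \<in> gen_ideal k b"
proof -
  assume "c \<in> gen_ideal k b"
  then obtain u where u: "c = (\<Sum>i<k. ga_mult (b i) (u i))" unfolding gen_ideal_def by blast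
  have "(\<lambda>z. c (z + g)) = (\<Sum>i<k. ga_mult (b i) (\<lambda>z. u i (z + g)))"
    unfolding u ga_mult_shift_right by (simp add: fun_eq_iff sum_fun_apply)
  thus ?thesis by (simp only: gen_idealI)
qed

lemma gen_ideal_generator:
  fixes b :: "nat \<Rightarrow> ('g::{finite,ab_group_add} \<Rightarrow> 'f::field)"
  assumes "i < k"
  shows "b i \<in> gen_ideal k b"
proof -
  define x :: "nat \<Rightarrow> 'g \<Rightarrow> 'f" where "x = (\<lambda>i'. if i' = i then (\<lambda>w. if w = 0 then 1 else 0) else 0)"
  have "(\<Sum>i'<k. ga_mult (b i') (x i')) = (\<Sum>i'<k. if i' = i then b i else 0)"
    by (rule sum.cong) (auto simp: x_def ga_mult_unit_right ga_mult_zero_right)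
  also have "\<dots> = b i" using assms by simp
  finally show ?thesis by (metis gen_idealI)
qed

lemma two_le_card_gen_ideal:
  fixes b :: "nat \<Rightarrow> ('g::{finite,ab_group_add} \<Rightarrow> 'f::{finite,field})"
  assumes "gen_ideal k b \<noteq> {0}"
  shows "2 \<le> card (gen_ideal k b)"
proof -
  have "0 \<in> gen_ideal k b" using lin_subspace_gen_ideal unfolding lin_subspace_def by blast
  with assms obtain x where "x \<in> gen_ideal k b" "x \<noteq> 0" by blast
  hence "card {0, x} \<le> card (gen_ideal k b)" using \<open>0 \<in> gen_ideal k b\<close> by (intro card_mono) auto
  thus ?thesis using \<open>x \<noteq> 0\<close> by simp
qed

lemma card_gen_ideal_fiber_le:
  fixes J :: "('g::{finite,ab_group_add} \<Rightarrow> 'f::{finite,field}) set"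
  shows "card {b \<in> vecs k. gen_ideal k b = J} \<le> card J ^ k"
proof -
  have "{b \<in> vecs k. gen_ideal k b = J} \<subseteq> words k J"
    by (auto simp: vecs_def words_def gen_ideal_generator)
  hence "card {b \<in> vecs k. gen_ideal k b = J} \<le> card (words k J)"
    by (intro card_mono) (simp_all add: finite_words)
  thus ?thesis by (simp add: card_words)
qed

lemma vec_mat_diff: "vec_mat k n b (A - A') = vec_mat k n b A - vec_mat k n b A'"
  unfolding vec_mat_def by (auto simp: fun_eq_iff ga_mult_diff_right sum_subtractf sum_fun_apply)

lemma mats_diff: "A \<in> mats k n \<Longrightarrow> A' \<in> mats k n \<Longrightarrow> A - A' \<in> mats k n"
  unfolding mats_def by auto

lemma image_vec_mat: "(\<lambda>A. vec_mat k n b A) ` mats k n = words n (gen_ideal k b)"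
proof
  show "(\<lambda>A. vec_mat k n b A) ` mats k n \<subseteq> words n (gen_ideal k b)"
    unfolding vec_mat_def words_def by (auto intro: gen_idealI)
next
  show "words n (gen_ideal k b) \<subseteq> (\<lambda>A. vec_mat k n b A) ` mats k n"
  proof
    fix c assume c: "c \<in> words n (gen_ideal k b)"
    have "\<forall>j. \<exists>x. j < n \<longrightarrow> c j = (\<Sum>i<k. ga_mult (b i) (x i))"
      using c unfolding words_def gen_ideal_def by blast
    then obtain X where X: "\<And>j. j < n \<Longrightarrow> c j = (\<Sum>i<k. ga_mult (b i) (X j i))" by metis
    define A where "A = (\<lambda>i j. if i < k \<and> j < n then X j i else 0)"
    have "A \<in> mats k n" unfolding A_def mats_def by auto
    moreover have "vec_mat k n b A = c"
    proof
      fix j show "vec_mat k n b A j = c j"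
      proof (cases "j < n")
        case True
        have "vec_mat k n b A j = (\<Sum>i<k. ga_mult (b i) (X j i))"
          unfolding vec_mat_def A_def using True by (auto intro!: sum.cong)
        thus ?thesis using X True by simp
      next
        case False thus ?thesis using c by (simp add: vec_mat_def words_def)
      qed
    qed
    ultimately show "c \<in> (\<lambda>A. vec_mat k n b A) ` mats k n" by blast
  qed
qed

text \<open>All fibres of an additive map on a finite subgroup have the same size.\<close>

lemma card_preimage_hom:
  fixes \<phi> :: "'a::ab_group_add \<Rightarrow> 'b::ab_group_add"
  assumes fin: "finite M" and cl: "\<And>x y. x \<in> M \<Longrightarrow> y \<in> M \<Longrightarrow> x - y \<in> M"
    and hom: "\<And>x y. x \<in> M \<Longrightarrow> y \<in> M \<Longrightarrow> \<phi> (x - y) = \<phi> x - \<phi> y"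
  shows "card {A\<in>M. \<phi> A \<in> T} * card (\<phi> ` M) = card (T \<inter> \<phi> ` M) * card M"
proof -
  define K where "K = {A\<in>M. \<phi> A = 0}"
  have fibre: "card {A\<in>M. \<phi> A = y} = card K" if y: "y \<in> \<phi> ` M" for y
  proof -
    obtain A0 where A0: "A0 \<in> M" "y = \<phi> A0" using y by blast
    have "{A\<in>M. \<phi> A = y} = (\<lambda>B. B + A0) ` K"
    proof (intro equalityI subsetI)
      fix A assume A: "A \<in> {A\<in>M. \<phi> A = y}"
      hence "A - A0 \<in> K" using A0 cl hom unfolding K_def by auto
      thus "A \<in> (\<lambda>B. B + A0) ` K" by (metis diff_add_cancel imageI)
    next
      fix A assume "A \<in> (\<lambda>B. B + A0) ` K"
      then obtain B where B: "B \<in> K" "A = B + A0" by blast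
      have "0 \<in> M" using cl[OF A0(1) A0(1)] by simp
      hence "A \<in> M" using cl[OF _ cl[OF _ A0(1)], of B 0] B unfolding K_def by simp
      moreover have "\<phi> A - \<phi> A0 = 0" using hom[OF \<open>A \<in> M\<close> A0(1)] B unfolding K_def by simp
      ultimately show "A \<in> {A\<in>M. \<phi> A = y}" using A0 by simp
    qed
    moreover have "inj_on (\<lambda>B. B + A0) K" by (auto simp: inj_on_def)
    ultimately show ?thesis by (simp add: card_image)
  qed
  have partition: "card {A\<in>M. \<phi> A \<in> T'} = card (T' \<inter> \<phi> ` M) * card K" for T'
  proof -
    have "{A\<in>M. \<phi> A \<in> T'} = (\<Union>y\<in>T' \<inter> \<phi> ` M. {A\<in>M. \<phi> A = y})" by auto
    hence "card {A\<in>M. \<phi> A \<in> T'} = (\<Sum>y\<in>T' \<inter> \<phi> ` M. card {A\<in>M. \<phi> A = y})"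
      by (simp only:) (rule card_UN_disjoint, use fin in auto)
    also have "\<dots> = (\<Sum>y\<in>T' \<inter> \<phi> ` M. card K)" by (rule sum.cong) (auto simp: fibre)
    finally show ?thesis by simp
  qed
  show ?thesis using partition[of T] partition[of UNIV] by simp
qed

text \<open>For a fixed message \<open>b\<close>, the codeword \<open>b A\<close> of a uniformly random \<open>A\<close> is uniformly
  distributed on \<open>J\<^sup>n\<close>, \<open>J\<close> the ideal generated by the entries of \<open>b\<close>.\<close>

lemma card_mats_vec_mat_in:
  fixes b :: "nat \<Rightarrow> ('g::{finite,ab_group_add} \<Rightarrow> 'f::{finite,field})"
  shows "card {A \<in> mats k n. vec_mat k n b A \<in> T} * card (gen_ideal k b) ^ n
     = card (T \<inter> words n (gen_ideal k b)) * card (mats k n :: (nat \<Rightarrow> nat \<Rightarrow> ('g \<Rightarrow> 'f)) set)"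
proof -
  have "card {A \<in> mats k n. vec_mat k n b A \<in> T} * card (vec_mat k n b ` mats k n)
      = card (T \<inter> vec_mat k n b ` mats k n) * card (mats k n :: (nat \<Rightarrow> nat \<Rightarrow> ('g \<Rightarrow> 'f)) set)"
    by (rule card_preimage_hom) (simp_all add: finite_mats mats_diff vec_mat_diff)
  thus ?thesis by (simp add: image_vec_mat card_words)
qed

lemma card_mats_light_codeword_le:
  fixes b :: "nat \<Rightarrow> ('g::{finite,ab_group_add} \<Rightarrow> 'f::{finite,field})"
  assumes d0: "0 < \<delta>" and d1: "\<delta> \<le> 1 - 1 / real (card (UNIV :: 'f set))"
  shows "real (card {A \<in> mats k n. vec_mat k n b A \<in> light_words n \<delta> - {0}})
    \<le> real (card (mats k n :: (nat \<Rightarrow> nat \<Rightarrow> ('g \<Rightarrow> 'f)) set)) *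
       (if gen_ideal k b = {0} then 0 else real (card (UNIV :: 'g set)) *
          real (card (gen_ideal k b)) powr (real n * hq (real (card (UNIV :: 'f set))) \<delta> - real n))"
proof -
  define M where "M = (mats k n :: (nat \<Rightarrow> nat \<Rightarrow> ('g \<Rightarrow> 'f)) set)"
  define J where "J = gen_ideal k b"
  define h where "h = hq (real (card (UNIV :: 'f set))) \<delta>"
  define L where "L = (light_words n \<delta> - {0}) \<inter> words n J"
  have "0 \<in> J" using lin_subspace_gen_ideal[of k b] unfolding J_def lin_subspace_def by blast
  hence cJ: "0 < card J" by (auto simp: card_gt_0_iff)
  have uniform: "real (card {A\<in>M. vec_mat k n b A \<in> light_words n \<delta> - {0}}) * real (card J) ^ n
      = real (card L) * real (card M)"
    using card_mats_vec_mat_in[of k n b "light_words n \<delta> - {0}"] unfolding M_def J_def L_def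
    by (simp only: of_nat_mult[symmetric] of_nat_power[symmetric] of_nat_eq_iff)
  show ?thesis
  proof (cases "J = {0}")
    case True
    have "words n {0} = {0::nat \<Rightarrow> 'g \<Rightarrow> 'f}" by (auto simp: words_def fun_eq_iff) (metis not_le)
    hence "L = {}" using True unfolding L_def by auto
    thus ?thesis using uniform True cJ unfolding M_def J_def by simp
  next
    case False
    have "real (card L) \<le> real (card (words n J \<inter> light_words n \<delta>))"
      unfolding L_def by (intro of_nat_mono card_mono) (auto simp: finite_words)
    also have "\<dots> \<le> real (card (UNIV :: 'g set)) * real (card J) powr (real n * h)"
      unfolding h_def J_def by (rule card_light_words_le[OF lin_subspace_gen_ideal gen_ideal_shift d0 d1])
    finally have "real (card {A\<in>M. vec_mat k n b A \<in> light_words n \<delta> - {0}}) * real (card J) ^ n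
        \<le> real (card (UNIV :: 'g set)) * real (card J) powr (real n * h) * real (card M)"
      unfolding uniform by (simp add: mult_right_mono)
    moreover have "real (card J) powr (real n * h) = real (card J) powr (real n * h - real n) * real (card J) ^ n"
      using cJ by (simp add: powr_diff powr_realpow)
    ultimately show ?thesis
      using cJ False unfolding M_def J_def h_def by (simp add: mult_ac)
  qed
qed

section \<open>The union bound over messages\<close>

text \<open>A message generating the ideal \<open>J \<noteq> 0\<close> is one of at most \<open>|J|\<^sup>k\<close>, and its codeword is
  light with probability at most \<open>|G| |J|\<^bsup>n h - n\<^esup>\<close>; as \<open>|J| \<ge> 2\<close>, the product is at most
  \<open>|G| 2\<^bsup>k + n h - n\<^esup>\<close> once that exponent is nonpositive. The number of ideals is bounded
  crudely by the number of all subsets of \<open>FG\<close>, a constant independent of \<open>n\<close>.\<close>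

lemma card_mats_with_light_codeword_le:
  fixes \<delta> :: real and n k :: nat
  assumes d0: "0 < \<delta>" and d1: "\<delta> \<le> 1 - 1 / real (card (UNIV :: 'f::{finite,field} set))"
    and E: "real k + real n * hq (real (card (UNIV :: 'f set))) \<delta> - real n \<le> 0"
  shows "real (card {A \<in> mats k n. \<exists>b\<in>vecs k.
             vec_mat k n b A \<in> (light_words n \<delta> - {0} :: (nat \<Rightarrow> 'g::{finite,ab_group_add} \<Rightarrow> 'f) set)})
     \<le> real (card (mats k n :: (nat \<Rightarrow> nat \<Rightarrow> ('g \<Rightarrow> 'f)) set)) *
        (real (card (UNIV :: 'g set)) * real (card (UNIV :: ('g \<Rightarrow> 'f) set set)) *
         2 powr (real k + real n * hq (real (card (UNIV :: 'f set))) \<delta> - real n))"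
proof -
  define M where "M = (mats k n :: (nat \<Rightarrow> nat \<Rightarrow> ('g \<Rightarrow> 'f)) set)"
  define V where "V = (vecs k :: (nat \<Rightarrow> ('g \<Rightarrow> 'f)) set)"
  define S where "S = (light_words n \<delta> - {0} :: (nat \<Rightarrow> 'g \<Rightarrow> 'f) set)"
  define h where "h = hq (real (card (UNIV :: 'f set))) \<delta>"
  define m where "m = real (card (UNIV :: 'g set))"
  define e where "e = real k + real n * h - real n"
  define t where "t J = (if J = {0} then 0 else m * real (card J) powr (real n * h - real n))"
    for J :: "('g \<Rightarrow> 'f) set"
  have finV: "finite V" unfolding V_def by (rule finite_vecs)
  have fibre: "real (card {b\<in>V. gen_ideal k b = J}) * t J \<le> m * 2 powr e"
    if J: "J \<in> gen_ideal k ` V" for J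
  proof (cases "J = {0}")
    case True thus ?thesis by (simp add: t_def m_def)
  next
    case False
    hence J2: "2 \<le> real (card J)" using J two_le_card_gen_ideal by fastforce
    have "real (card {b\<in>V. gen_ideal k b = J}) \<le> real (card J) ^ k"
      using card_gen_ideal_fiber_le[of k J] unfolding V_def
      by (simp only: of_nat_power[symmetric] of_nat_le_iff)
    hence "real (card {b\<in>V. gen_ideal k b = J}) * t J \<le> real (card J) ^ k * t J"
      by (intro mult_right_mono) (auto simp: t_def m_def)
    also have "\<dots> = m * real (card J) powr e"
      using False J2 unfolding t_def e_def
      by (simp add: powr_realpow[symmetric] powr_add[symmetric] algebra_simps)
    also have "\<dots> \<le> m * 2 powr e"
      using E J2 unfolding e_def h_def m_def by (intro mult_left_mono powr_mono2') auto
    finally show ?thesis .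
  qed
  have "real (card {A \<in> M. \<exists>b\<in>V. vec_mat k n b A \<in> S})
      \<le> real (\<Sum>b\<in>V. card {A\<in>M. vec_mat k n b A \<in> S})"
  proof -
    have "{A \<in> M. \<exists>b\<in>V. vec_mat k n b A \<in> S} = (\<Union>b\<in>V. {A\<in>M. vec_mat k n b A \<in> S})" by auto
    thus ?thesis by (simp only:) (intro of_nat_mono card_UN_le finV)
  qed
  also have "\<dots> \<le> (\<Sum>b\<in>V. real (card M) * t (gen_ideal k b))"
    unfolding of_nat_sum M_def S_def t_def m_def h_def
    by (intro sum_mono card_mats_light_codeword_le[OF d0 d1])
  also have "\<dots> = real (card M) * (\<Sum>J\<in>gen_ideal k ` V. real (card {b\<in>V. gen_ideal k b = J}) * t J)"
  proof -
    have "(\<Sum>b\<in>V. t (gen_ideal k b)) = (\<Sum>J\<in>gen_ideal k ` V. \<Sum>b\<in>{b\<in>V. gen_ideal k b = J}. t J)"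
      by (subst sum.image_gen[OF finV]) (auto intro!: sum.cong)
    thus ?thesis by (simp add: sum_distrib_left[symmetric])
  qed
  also have "\<dots> \<le> real (card M) * (\<Sum>J\<in>gen_ideal k ` V. m * 2 powr e)"
    by (intro mult_left_mono sum_mono fibre) auto
  also have "\<dots> \<le> real (card M) * (m * real (card (UNIV :: ('g \<Rightarrow> 'f) set set)) * 2 powr e)"
    by (intro mult_left_mono) (auto simp: m_def mult_ac intro!: mult_left_mono card_mono)
  finally show ?thesis unfolding M_def V_def S_def m_def e_def h_def .
qed

lemma light_codeword_if_rel_distance_le:
  fixes A :: "nat \<Rightarrow> nat \<Rightarrow> ('g::{finite,ab_group_add} \<Rightarrow> 'f::{finite,field})"
  assumes n: "1 \<le> n" and le: "\<not> rel_distance n (code_of k n A) > ereal \<delta>"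
  shows "\<exists>b\<in>vecs k. vec_mat k n b A \<in> light_words n \<delta> - {0}"
proof -
  define C where "C = code_of k n A"
  have C: "C = (\<lambda>b. vec_mat k n b A) ` vecs k" unfolding C_def code_of_def by auto
  define mn where "mn = real (card (UNIV :: 'g set) * n)"
  have mn0: "0 < mn" unfolding mn_def using n by (simp add: finite_UNIV_card_ge_0)
  have "C - {0} \<noteq> {}"
  proof
    assume empty: "C - {0} = {}"
    have "min_weight n C = \<infinity>" unfolding min_weight_def empty by (simp add: top_enat_def)
    hence "rel_distance n C = \<infinity>" unfolding rel_distance_def mn_def[symmetric] using mn0 by simp
    thus False using le unfolding C_def[symmetric] by simp
  qed
  moreover have "finite C" unfolding C by (intro finite_imageI finite_vecs)
  ultimately have W: "finite ((\<lambda>c. enat (weight n c)) ` (C - {0}))" "(\<lambda>c. enat (weight n c)) ` (C - {0}) \<noteq> {}"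
    by auto
  have "Inf ((\<lambda>c. enat (weight n c)) ` (C - {0})) \<in> (\<lambda>c. enat (weight n c)) ` (C - {0})"
    using Min_in[OF W] Min_Inf[OF W] by simp
  then obtain c where c: "c \<in> C - {0}" "min_weight n C = enat (weight n c)"
    unfolding min_weight_def by auto
  have "rel_distance n C = ereal (real (weight n c) / mn)"
    unfolding rel_distance_def c(2) mn_def[symmetric] using mn0 by simp
  hence "ereal (real (weight n c) / mn) \<le> ereal \<delta>" using le unfolding C_def by simp
  hence "real (weight n c) \<le> \<delta> * mn" using mn0 by (simp add: divide_le_eq)
  with c(1) show ?thesis unfolding C light_words_def mn_def by auto
qed

lemma prob_good_le_1: "prob_good TYPE('f::{finite,field}) TYPE('g::{finite,ab_group_add}) r \<delta> n \<le> 1"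
proof -
  define M where "M = (mats (nat (round (r * real n))) n :: (nat \<Rightarrow> nat \<Rightarrow> ('g \<Rightarrow> 'f)) set)"
  have "card {A \<in> M. rel_distance n (code_of (nat (round (r * real n))) n A) > ereal \<delta>} \<le> card M"
    unfolding M_def by (intro card_mono finite_mats) auto
  thus ?thesis unfolding prob_good_def Let_def M_def[symmetric]
    by (cases "card M = 0") (auto simp: divide_le_eq)
qed

lemma one_minus_prob_good_le:
  fixes r \<delta> :: real and n :: nat
  defines "k \<equiv> nat (round (r * real n))" and "h \<equiv> hq (real (card (UNIV :: 'f::{finite,field} set))) \<delta>"
  assumes d0: "0 < \<delta>" and d1: "\<delta> \<le> 1 - 1 / real (card (UNIV :: 'f set))"
    and n: "1 \<le> n" and E: "real k + real n * h - real n \<le> 0"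
  shows "1 - prob_good TYPE('f) TYPE('g::{finite,ab_group_add}) r \<delta> n
    \<le> real (card (UNIV :: 'g set)) * real (card (UNIV :: ('g \<Rightarrow> 'f) set set)) *
       2 powr (real k + real n * h - real n)"
proof -
  define M where "M = (mats k n :: (nat \<Rightarrow> nat \<Rightarrow> ('g \<Rightarrow> 'f)) set)"
  define G where "G = {A \<in> M. rel_distance n (code_of k n A) > ereal \<delta>}"
  define B where "B = {A \<in> M. \<exists>b\<in>vecs k. vec_mat k n b A \<in> light_words n \<delta> - {0}}"
  have finM: "finite M" unfolding M_def by (rule finite_mats)
  have "0 \<in> M" unfolding M_def mats_def by simp
  hence cM: "0 < card M" using finM by (auto simp: card_gt_0_iff)
  have "M - G \<subseteq> B"
    using light_codeword_if_rel_distance_le[OF n] unfolding G_def B_def by blast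
  hence "card (M - G) \<le> card B" using finM by (intro card_mono) (auto simp: B_def)
  moreover have "card (M - G) = card M - card G"
    by (rule card_Diff_subset) (use finM in \<open>auto simp: G_def\<close>)
  moreover have "card G \<le> card M" using finM by (intro card_mono) (auto simp: G_def)
  ultimately have "card M \<le> card G + card B" by linarith
  hence "real (card M) \<le> real (card G + card B)" by (simp only: of_nat_le_iff)
  hence le: "real (card M) - real (card G) \<le> real (card B)" by simp
  have "1 - real (card G) / real (card M) = (real (card M) - real (card G)) / real (card M)"
    using cM by (simp add: field_simps)
  also have "\<dots> \<le> real (card B) / real (card M)" using le by (simp add: divide_right_mono)
  also have "\<dots> \<le> real (card (UNIV :: 'g set)) * real (card (UNIV :: ('g \<Rightarrow> 'f) set set)) *
       2 powr (real k + real n * h - real n)"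
    using card_mats_with_light_codeword_le[OF d0 d1 E[unfolded h_def]] cM
    unfolding B_def M_def h_def by (simp add: divide_le_eq mult.commute)
  finally show ?thesis unfolding prob_good_def Let_def k_def[symmetric] M_def[symmetric] G_def .
qed

lemma tendsto_one_if_exp_tail:
  fixes P :: "nat \<Rightarrow> real" and a C :: real
  assumes le1: "\<And>n. P n \<le> 1" and a: "0 < a"
    and tail: "\<forall>\<^sub>F n in sequentially. 1 - P n \<le> C * exp (- a * real n)"
  shows "P \<longlonglongrightarrow> 1 \<and> (\<exists>c>0. \<exists>N. \<forall>n\<ge>N. 1 - P n \<le> exp (- c * real n))"
proof -
  define c where "c = a / 2"
  have c: "0 < c" unfolding c_def using a by simp
  have exp0: "(\<lambda>n. exp (- c * real n)) \<longlonglongrightarrow> 0"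
  proof -
    have "(\<lambda>n. exp (- c) ^ n) \<longlonglongrightarrow> 0" using c by (intro LIMSEQ_power_zero) simp
    thus ?thesis by (simp add: exp_of_nat_mult[symmetric] mult.commute)
  qed
  have "\<forall>\<^sub>F n in sequentially. C * exp (- c * real n) < 1"
    using tendsto_mult_right_zero[OF exp0, of C] by (rule order_tendstoD) simp
  with tail have ev: "\<forall>\<^sub>F n in sequentially. 1 - P n \<le> exp (- c * real n)"
  proof eventually_elim
    case (elim n)
    have "C * exp (- a * real n) = (C * exp (- c * real n)) * exp (- c * real n)"
      unfolding c_def by (simp add: exp_add[symmetric] algebra_simps)
    also have "\<dots> \<le> 1 * exp (- c * real n)" using elim(2) by (intro mult_right_mono) auto
    finally show ?case using elim(1) by simp
  qed
  hence bound: "\<exists>N. \<forall>n\<ge>N. 1 - P n \<le> exp (- c * real n)" by (simp add: eventually_sequentially)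
  have lim: "(\<lambda>n. 1 - exp (- c * real n)) \<longlonglongrightarrow> 1"
    using tendsto_diff[OF tendsto_const exp0, of 1] by simp
  have low: "\<forall>\<^sub>F n in sequentially. 1 - exp (- c * real n) \<le> P n"
    by (rule eventually_mono[OF ev]) simp
  have "P \<longlonglongrightarrow> 1"
    by (rule tendsto_sandwich[OF low _ lim tendsto_const]) (simp add: le1)
  with bound c show ?thesis by blast
qed

lemma nat_round_le: "0 \<le> x \<Longrightarrow> real (nat (round x)) \<le> x + 1 / 2"
  using of_int_round_le[of x] round_mono[of 0 x] by simp

theorem corollary4p2:
  fixes r \<delta> :: real
  assumes "0 < r" "r < 1"
    and "0 < \<delta>" "\<delta> < 1 - 1 / real (card (UNIV :: 'f::{finite,field} set))"
    and "r < gq (real (card (UNIV :: 'f set))) \<delta>"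
  shows "(\<lambda>n. prob_good TYPE('f) TYPE('g::{finite,ab_group_add}) r \<delta> n) \<longlonglongrightarrow> 1
    \<and> (\<exists>c>0. \<exists>N. \<forall>n\<ge>N. 1 - prob_good TYPE('f) TYPE('g) r \<delta> n \<le> exp (- c * real n))"
proof (rule tendsto_one_if_exp_tail[OF prob_good_le_1])
  define h where "h = hq (real (card (UNIV :: 'f set))) \<delta>"
  define \<epsilon> where "\<epsilon> = gq (real (card (UNIV :: 'f set))) \<delta> - r"
  define K where "K = real (card (UNIV :: 'g set)) * real (card (UNIV :: ('g \<Rightarrow> 'f) set set))"
  have \<epsilon>: "0 < \<epsilon>" and h: "h = 1 - r - \<epsilon>" using assms(5) unfolding \<epsilon>_def h_def gq_def by simp_all
  show "0 < \<epsilon> * ln 2" using \<epsilon> by simp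
  show "\<forall>\<^sub>F n in sequentially. 1 - prob_good TYPE('f) TYPE('g) r \<delta> n
          \<le> K * 2 powr (1 / 2) * exp (- (\<epsilon> * ln 2) * real n)"
  proof (rule eventually_sequentiallyI[of "max 1 (nat \<lceil>1 / (2 * \<epsilon>)\<rceil>)"])
    fix n assume n: "max 1 (nat \<lceil>1 / (2 * \<epsilon>)\<rceil>) \<le> n"
    have "1 / (2 * \<epsilon>) \<le> real n" using n by linarith
    hence neg: "1 / 2 - \<epsilon> * real n \<le> 0" using \<epsilon> by (simp add: field_simps)
    have E: "real (nat (round (r * real n))) + real n * h - real n \<le> 1 / 2 - \<epsilon> * real n"
      using nat_round_le[of "r * real n"] assms(1) unfolding h by (simp add: algebra_simps)
    have "1 - prob_good TYPE('f) TYPE('g) r \<delta> n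
        \<le> K * 2 powr (real (nat (round (r * real n))) + real n * h - real n)"
      unfolding K_def h_def
      by (rule one_minus_prob_good_le) (use assms(3,4) n order.trans[OF E neg] in \<open>auto simp: h_def\<close>)
    also have "\<dots> \<le> K * 2 powr (1 / 2 - \<epsilon> * real n)"
      using E by (intro mult_left_mono powr_mono) (simp_all add: K_def)
    also have "(2::real) powr (1 / 2 - \<epsilon> * real n) = exp (1 / 2 * ln 2 + - (\<epsilon> * ln 2) * real n)"
      by (simp add: powr_def algebra_simps)
    also have "\<dots> = 2 powr (1 / 2) * exp (- (\<epsilon> * ln 2) * real n)"
      by (simp only: exp_add) (simp add: powr_def)
    finally show "1 - prob_good TYPE('f) TYPE('g) r \<delta> n \<le> K * 2 powr (1 / 2) * exp (- (\<epsilon> * ln 2) * real n)"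
      by (simp add: mult_ac)
  qed
qed

end
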